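(* Let $\mathbf A,\mathbf B$ be $\tau$-algebras. Then $\mathbf B\in\mathbb{HSP}(\mathbf A)$ if and only if the map $\varepsilon:\mathbf A^\uparrow\to\mathbf B^\uparrow$, $\varepsilon(t^{\mathbf A})=t^{\mathbf B}$ ($t$ a $\tau$-term over $V$), is a well-defined homomorphism of infinitary clone $\tau$-algebras.
   Context: $\tau$ is a set of $\omega$-ary operation symbols disjoint from $\{q\}\cup\{e_i:i\in\omega\}$; a $\tau$-algebra has operations $A^\omega\to A$. $\tau$-terms over $V=\{e_0,e_1,\dots\}$ are well-founded countably branching terms built by $f(t_0,t_1,\dots)$; term operations: $e_i^{\mathbf A}(s)=s_i$, $f(t_0,t_1,\dots)^{\mathbf A}(s)=f^{\mathbf A}(t_0^{\mathbf A}(s),t_1^{\mathbf A}(s),\dots)$. $\mathbb{HSP}(\mathbf A)$ is the class of algebras isomorphic to homomorphic images of subalgebras of arbitrary direct powers of $\mathbf A$. An infinitary clone $\tau$-algebra is an algebra with constants $e_i$ ($i\in\omega$), a constant $f$ for each $f\in\tau$, and an $\omega$-ary $q$ satisfying (N1) $q(e_i,x_0,x_1,\dots)=x_i$; (N2) $q(x,e_0,e_1,\dots)=x$; (N3) $q(q(x,y_0,y_1,\dots),\boldsymbol z)=q(x,q(y_0,\boldsymbol z),q(y_1,\boldsymbol z),\dots)$. $\mathbf A^\uparrow$ is the set $\{t^{\mathbf A}\}$ of term operations with $e_i(s)=s_i$, $q(g_0,g_1,\dots)(s)=g_0(g_1(s),g_2(s),\dots)$ and $f\mapsto f^{\mathbf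 A}$. *)

theory Defs
  imports "HOL-Library.FuncSet"
begin

datatype 'f trm = Var nat | Fn 'f "nat \<Rightarrow> 'f trm"

record ('a, 'f) alg =
  carrier :: "'a set"
  ops :: "'f \<Rightarrow> (nat \<Rightarrow> 'a) \<Rightarrow> 'a"

definition tau_alg :: "('a, 'f) alg \<Rightarrow> bool" where
  "tau_alg A \<longleftrightarrow> (\<forall>f s. s \<in> UNIV \<rightarrow> carrier A \<longrightarrow> ops A f s \<in> carrier A)"

primrec term_eval :: "('f \<Rightarrow> (nat \<Rightarrow> 'a) \<Rightarrow> 'a) \<Rightarrow> 'f trm \<Rightarrow> (nat \<Rightarrow> 'a) \<Rightarrow> 'a" where
  "term_eval F (Var i) s = s i"
| "term_eval F (Fn f ts) s = F f (\<lambda>i. term_eval F (ts i) s)"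

definition term_op :: "('a, 'f) alg \<Rightarrow> 'f trm \<Rightarrow> (nat \<Rightarrow> 'a) \<Rightarrow> 'a" where
  "term_op A t = restrict (term_eval (ops A) t) (UNIV \<rightarrow> carrier A)"

definition power_alg :: "'i set \<Rightarrow> ('a, 'f) alg \<Rightarrow> ('i \<Rightarrow> 'a, 'f) alg" where
  "power_alg I A = \<lparr> carrier = I \<rightarrow>\<^sub>E carrier A,
                     ops = (\<lambda>f s. \<lambda>i\<in>I. ops A f (\<lambda>n. s n i)) \<rparr>"

definition subuniverse :: "'a set \<Rightarrow> ('a, 'f) alg \<Rightarrow> bool" where
  "subuniverse S A \<longleftrightarrow> S \<subseteq> carrier A \<and>
     (\<forall>f s. s \<in> UNIV \<rightarrow> S \<longrightarrow> ops A f s \<in> S)"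

definition alg_hom :: "('a, 'f) alg \<Rightarrow> ('b, 'f) alg \<Rightarrow> ('a \<Rightarrow> 'b) \<Rightarrow> bool" where
  "alg_hom A B h \<longleftrightarrow> h \<in> carrier A \<rightarrow> carrier B \<and>
     (\<forall>f s. s \<in> UNIV \<rightarrow> carrier A \<longrightarrow> h (ops A f s) = ops B f (h \<circ> s))"

definition HSP_via :: "'i set \<Rightarrow> ('a, 'f) alg \<Rightarrow> ('b, 'f) alg \<Rightarrow> bool" where
  "HSP_via I A B \<longleftrightarrow> (\<exists>S h. subuniverse S (power_alg I A) \<and>
      alg_hom \<lparr> carrier = S, ops = ops (power_alg I A) \<rparr> B h \<and> h ` S = carrier B)"

record ('c, 'f) ica =
  ccarrier :: "'c set"
  proj :: "nat \<Rightarrow> 'c"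
  cst :: "'f \<Rightarrow> 'c"
  qop :: "'c \<Rightarrow> (nat \<Rightarrow> 'c) \<Rightarrow> 'c"

definition ica_hom :: "('c, 'f) ica \<Rightarrow> ('d, 'f) ica \<Rightarrow> ('c \<Rightarrow> 'd) \<Rightarrow> bool" where
  "ica_hom C D h \<longleftrightarrow> h \<in> ccarrier C \<rightarrow> ccarrier D \<and>
     (\<forall>i. h (proj C i) = proj D i) \<and>
     (\<forall>f. h (cst C f) = cst D f) \<and>
     (\<forall>x ys. x \<in> ccarrier C \<longrightarrow> ys \<in> UNIV \<rightarrow> ccarrier C \<longrightarrow>
            h (qop C x ys) = qop D (h x) (h \<circ> ys))"

definition clone_up :: "('a, 'f) alg \<Rightarrow> ((nat \<Rightarrow> 'a) \<Rightarrow> 'a, 'f) ica" where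
  "clone_up A = \<lparr> ccarrier = range (term_op A),
                  proj = (\<lambda>i. term_op A (Var i)),
                  cst = (\<lambda>f. restrict (ops A f) (UNIV \<rightarrow> carrier A)),
                  qop = (\<lambda>g gs. restrict (\<lambda>s. g (\<lambda>i. gs i s)) (UNIV \<rightarrow> carrier A)) \<rparr>"

definition eps_well_defined :: "('a, 'f) alg \<Rightarrow> ('b, 'f) alg \<Rightarrow> bool" where
  "eps_well_defined A B \<longleftrightarrow> (\<forall>t u. term_op A t = term_op A u \<longrightarrow> term_op B t = term_op B u)"

definition eps :: "('a, 'f) alg \<Rightarrow> ('b, 'f) alg \<Rightarrow> ((nat \<Rightarrow> 'a) \<Rightarrow> 'a) \<Rightarrow> ((nat \<Rightarrow> 'b) \<Rightarrow> 'b)" where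
  "eps A B g = term_op B (SOME t. g = term_op A t)"

end

theory Submission imports Defs "HOL-Library.Nat_Bijection" begin

text \<open>
  Forward direction: identities of \<open>A\<close> hold in every power, subalgebra and homomorphic
  image of \<open>A\<close>, so \<open>t\<^sup>A = u\<^sup>A\<close> forces \<open>t\<^sup>B = u\<^sup>B\<close>; since \<open>q\<close> of term operations is the
  term operation of a substitution instance, \<open>\<epsilon>\<close> commutes with \<open>q\<close>.

  Converse: with \<open>I = A\<^sup>B\<close>, let \<open>\<pi>\<^sub>b\<close> be the projection \<open>v \<mapsto> v b\<close> of \<open>A\<^sup>I\<close>. The elements
  \<open>t(\<pi>\<^sub>\<sigma>\<^sub>0, \<pi>\<^sub>\<sigma>\<^sub>1, \<dots>)\<close> form a subalgebra of \<open>A\<^sup>I\<close>, and \<open>t(\<pi>\<^sub>\<sigma>) \<mapsto> t\<^sup>B(\<sigma>)\<close> is a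
  well-defined surjective homomorphism onto \<open>B\<close>: an equation \<open>t(\<pi>\<^sub>\<sigma>) = u(\<pi>\<^sub>\<sigma>)\<close> says that
  \<open>t = u\<close> is an identity of \<open>A\<close> after identifying the variables \<open>i, j\<close> with \<open>\<sigma> i = \<sigma> j\<close>,
  and well-definedness of \<open>\<epsilon>\<close> transfers this identity to \<open>B\<close>.
\<close>

primrec subst :: "(nat \<Rightarrow> 'f trm) \<Rightarrow> 'f trm \<Rightarrow> 'f trm" where
  "subst \<theta> (Var i) = \<theta> i"
| "subst \<theta> (Fn f ts) = Fn f (\<lambda>i. subst \<theta> (ts i))"

lemma term_eval_subst:
  "term_eval F (subst \<theta> t) s = term_eval F t (\<lambda>i. term_eval F (\<theta> i) s)"
  by (induction t) auto

lemma term_eval_rename: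
  "term_eval F (subst (\<lambda>k. Var (r k)) t) s = term_eval F t (s \<circ> r)"
  by (simp add: term_eval_subst o_def)

lemma term_eval_closed:
  assumes "\<forall>f s. s \<in> UNIV \<rightarrow> S \<longrightarrow> F f s \<in> S" and "s \<in> UNIV \<rightarrow> S"
  shows "term_eval F t s \<in> S"
  using assms by (induction t) auto

lemma term_eval_in_carrier:
  "tau_alg A \<Longrightarrow> s \<in> UNIV \<rightarrow> carrier A \<Longrightarrow> term_eval (ops A) t s \<in> carrier A"
  by (rule term_eval_closed) (auto simp: tau_alg_def)

lemma term_op_eqD:
  "term_op A t = term_op A u \<Longrightarrow> s \<in> UNIV \<rightarrow> carrier A \<Longrightarrow>
     term_eval (ops A) t s = term_eval (ops A) u s"
  unfolding term_op_def by (metis restrict_apply')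

lemma term_eval_power_alg:
  assumes "s \<in> UNIV \<rightarrow> carrier (power_alg I A)"
  shows "term_eval (ops (power_alg I A)) t s = (\<lambda>i\<in>I. term_eval (ops A) t (\<lambda>n. s n i))"
proof (induction t)
  case (Var x)
  have "s x \<in> I \<rightarrow>\<^sub>E carrier A" using assms by (auto simp: power_alg_def)
  then show ?case by (auto simp: PiE_def extensional_def)
next
  case (Fn f ts)
  then show ?case by (auto simp: power_alg_def intro!: restrict_ext arg_cong[where f="ops A f"])
qed

lemma alg_hom_term_eval:
  assumes "alg_hom C B h" and "\<forall>f s. s \<in> UNIV \<rightarrow> carrier C \<longrightarrow> ops C f s \<in> carrier C"
    and "s \<in> UNIV \<rightarrow> carrier C"
  shows "h (term_eval (ops C) t s) = term_eval (ops B) t (h \<circ> s)"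
proof (induction t)
  case (Fn f ts)
  have "(\<lambda>i. term_eval (ops C) (ts i) s) \<in> UNIV \<rightarrow> carrier C"
    using term_eval_closed[OF assms(2,3)] by auto
  then have "h (term_eval (ops C) (Fn f ts) s) = ops B f (h \<circ> (\<lambda>i. term_eval (ops C) (ts i) s))"
    using assms(1) by (simp add: alg_hom_def)
  also have "\<dots> = term_eval (ops B) (Fn f ts) (h \<circ> s)"
    using Fn by (simp add: o_def)
  finally show ?case .
qed simp

lemma HSP_via_imp_eps_well_defined:
  fixes I :: "'i set" and A :: "('a, 'f) alg" and B :: "('b, 'f) alg"
  assumes "HSP_via I A B"
  shows "eps_well_defined A B"
  unfolding eps_well_defined_def
proof (intro allI impI)
  fix t u assume eq: "term_op A t = term_op A u"
  obtain S h where S: "subuniverse S (power_alg I A)"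
    and h: "alg_hom \<lparr>carrier = S, ops = ops (power_alg I A)\<rparr> B h" and onto: "h ` S = carrier B"
    using assms unfolding HSP_via_def by blast
  let ?C = "\<lparr>carrier = S, ops = ops (power_alg I A)\<rparr> :: ('i \<Rightarrow> 'a, 'f) alg"
  have C_closed: "\<forall>f s. s \<in> UNIV \<rightarrow> carrier ?C \<longrightarrow> ops ?C f s \<in> carrier ?C"
    using S by (simp add: subuniverse_def)
  show "term_op B t = term_op B u"
    unfolding term_op_def
  proof (rule restrict_ext)
    fix s' :: "nat \<Rightarrow> 'b" assume s': "s' \<in> UNIV \<rightarrow> carrier B"
    then have "\<forall>n. \<exists>x\<in>S. h x = s' n"
      using onto by (metis PiE UNIV_I imageE)
    then obtain s where sS: "\<And>n. s n \<in> S" and "\<And>n. h (s n) = s' n"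
      by metis
    then have hs: "h \<circ> s = s'"
      by auto
    have sP: "s \<in> UNIV \<rightarrow> carrier (power_alg I A)"
      using sS S by (auto simp: subuniverse_def)
    then have "\<And>i. i \<in> I \<Longrightarrow> (\<lambda>n. s n i) \<in> UNIV \<rightarrow> carrier A"
      by (auto simp: power_alg_def)
    then have "term_eval (ops ?C) t s = term_eval (ops ?C) u s"
      using term_eval_power_alg[OF sP] term_op_eqD[OF eq] by (auto intro!: restrict_ext)
    moreover have "s \<in> UNIV \<rightarrow> carrier ?C"
      using sS by simp
    ultimately show "term_eval (ops B) t s' = term_eval (ops B) u s'"
      using alg_hom_term_eval[OF h C_closed] hs by metis
  qed
qed

lemma eps_term_op: "eps_well_defined A B \<Longrightarrow> eps A B (term_op A t) = term_op B t"
  unfolding eps_def eps_well_defined_def by (metis (mono_tags) someI)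

lemma cst_clone_up: "cst (clone_up C) f = term_op C (Fn f Var)"
  unfolding clone_up_def term_op_def by (auto intro: restrict_ext)

lemma qop_clone_up_term_op:
  "tau_alg C \<Longrightarrow>
     qop (clone_up C) (term_op C t) (\<lambda>i. term_op C (\<theta> i)) = term_op C (subst \<theta> t)"
  unfolding clone_up_def term_op_def
  by (auto intro!: restrict_ext simp: term_eval_subst term_eval_in_carrier)

lemma eps_well_defined_imp_ica_hom:
  fixes A :: "('a, 'f) alg" and B :: "('b, 'f) alg"
  assumes wd: "eps_well_defined A B" and A: "tau_alg A" and B: "tau_alg B"
  shows "ica_hom (clone_up A) (clone_up B) (eps A B)"
  unfolding ica_hom_def
proof (intro conjI allI impI)
  show "eps A B \<in> ccarrier (clone_up A) \<rightarrow> ccarrier (clone_up B)"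
    using eps_term_op[OF wd] by (auto simp: clone_up_def)
  show "eps A B (proj (clone_up A) i) = proj (clone_up B) i" for i
    using eps_term_op[OF wd] by (simp add: clone_up_def)
  show "eps A B (cst (clone_up A) f) = cst (clone_up B) f" for f
    using eps_term_op[OF wd] by (simp add: cst_clone_up)
next
  fix x and ys :: "nat \<Rightarrow> (nat \<Rightarrow> 'a) \<Rightarrow> 'a"
  assume "x \<in> ccarrier (clone_up A)" and "ys \<in> UNIV \<rightarrow> ccarrier (clone_up A)"
  then obtain t \<theta> where x: "x = term_op A t" and ys: "ys = (\<lambda>i. term_op A (\<theta> i))"
    unfolding clone_up_def by (auto simp: Pi_iff image_iff) metis
  have "eps A B \<circ> ys = (\<lambda>i. term_op B (\<theta> i))"
    using ys eps_term_op[OF wd] by auto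
  then show "eps A B (qop (clone_up A) x ys) = qop (clone_up B) (eps A B x) (eps A B \<circ> ys)"
    using x ys qop_clone_up_term_op[OF A] qop_clone_up_term_op[OF B] eps_term_op[OF wd]
    by simp
qed

text \<open>\<open>proj_eval I A t \<sigma>\<close> is \<open>t(\<pi>\<^sub>\<sigma>\<^sub>0, \<pi>\<^sub>\<sigma>\<^sub>1, \<dots>)\<close> in \<open>A\<^sup>I\<close>, where \<open>\<pi>\<^sub>b v = v b\<close>.\<close>

definition proj_eval :: "('b \<Rightarrow> 'a) set \<Rightarrow> ('a, 'f) alg \<Rightarrow> 'f trm \<Rightarrow> (nat \<Rightarrow> 'b) \<Rightarrow> ('b \<Rightarrow> 'a) \<Rightarrow> 'a"
  where "proj_eval I A t \<sigma> = (\<lambda>v\<in>I. term_eval (ops A) t (v \<circ> \<sigma>))"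

lemma proj_eval_in_carrier:
  assumes "tau_alg A" and "\<sigma> \<in> UNIV \<rightarrow> carrier B"
  shows "proj_eval (carrier B \<rightarrow>\<^sub>E carrier A) A t \<sigma> \<in> carrier (power_alg (carrier B \<rightarrow>\<^sub>E carrier A) A)"
  unfolding proj_eval_def power_alg_def
  using assms by (auto intro!: term_eval_in_carrier)

lemma ops_power_alg_proj_eval:
  fixes \<sigma> :: "nat \<Rightarrow> nat \<Rightarrow> 'b"
  defines "\<tau> \<equiv> \<lambda>k. \<sigma> (fst (prod_decode k)) (snd (prod_decode k))"
  shows "ops (power_alg I A) f (\<lambda>n. proj_eval I A (t n) (\<sigma> n))
           = proj_eval I A (Fn f (\<lambda>n. subst (\<lambda>k. Var (prod_encode (n, k))) (t n))) \<tau>"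
    and "\<tau> \<circ> (\<lambda>k. prod_encode (n, k)) = \<sigma> n"
proof -
  show \<tau>_encode: "\<tau> \<circ> (\<lambda>k. prod_encode (n, k)) = \<sigma> n" for n
    by (simp add: \<tau>_def fun_eq_iff prod_encode_inverse)
  show "ops (power_alg I A) f (\<lambda>n. proj_eval I A (t n) (\<sigma> n))
          = proj_eval I A (Fn f (\<lambda>n. subst (\<lambda>k. Var (prod_encode (n, k))) (t n))) \<tau>"
    unfolding power_alg_def proj_eval_def
    by (auto intro!: restrict_ext simp: term_eval_rename comp_assoc \<tau>_encode)
qed

lemma term_eval_eq_if_proj_eval_eq_single:
  fixes A :: "('a, 'f) alg" and B :: "('b, 'f) alg"
  assumes wd: "eps_well_defined A B" and \<sigma>: "\<sigma> \<in> UNIV \<rightarrow> carrier B"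
    and eq: "proj_eval (carrier B \<rightarrow>\<^sub>E carrier A) A t \<sigma> = proj_eval (carrier B \<rightarrow>\<^sub>E carrier A) A u \<sigma>"
  shows "term_eval (ops B) t \<sigma> = term_eval (ops B) u \<sigma>"
proof -
  define rep where "rep i = (LEAST j. \<sigma> j = \<sigma> i)" for i
  have \<sigma>_rep: "\<sigma> (rep i) = \<sigma> i" for i
    unfolding rep_def by (rule LeastI) (rule refl)
  let ?\<theta> = "\<lambda>i. Var (rep i) :: 'f trm"
  have "term_op A (subst ?\<theta> t) = term_op A (subst ?\<theta> u)"
    unfolding term_op_def
  proof (rule restrict_ext)
    fix s :: "nat \<Rightarrow> 'a" assume s: "s \<in> UNIV \<rightarrow> carrier A"
    \<comment> \<open>every assignment \<open>s \<circ> rep\<close> is of the form \<open>v \<circ> \<sigma>\<close> for some \<open>v \<in> A\<^sup>B\<close>\<close>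
    define v where "v = (\<lambda>b\<in>carrier B. s (LEAST j. \<sigma> j = b))"
    have v: "v \<in> carrier B \<rightarrow>\<^sub>E carrier A"
      using s by (auto simp: v_def)
    have v\<sigma>: "v \<circ> \<sigma> = s \<circ> rep"
      using \<sigma> by (auto simp: v_def rep_def fun_eq_iff)
    have "term_eval (ops A) t (v \<circ> \<sigma>) = term_eval (ops A) u (v \<circ> \<sigma>)"
      using fun_cong[OF eq, of v] v by (simp add: proj_eval_def)
    then show "term_eval (ops A) (subst ?\<theta> t) s = term_eval (ops A) (subst ?\<theta> u) s"
      by (simp add: term_eval_rename v\<sigma>)
  qed
  then have "term_op B (subst ?\<theta> t) = term_op B (subst ?\<theta> u)"
    using wd unfolding eps_well_defined_def by blast
  then have "term_eval (ops B) (subst ?\<theta> t) \<sigma> = term_eval (ops B) (subst ?\<theta> u) \<sigma>"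
    using \<sigma> by (rule term_op_eqD)
  moreover have "\<sigma> \<circ> rep = \<sigma>"
    by (simp add: \<sigma>_rep fun_eq_iff)
  ultimately show ?thesis
    by (simp add: term_eval_rename)
qed

lemma term_eval_eq_if_proj_eval_eq:
  assumes wd: "eps_well_defined A B"
    and \<sigma>: "\<sigma> \<in> UNIV \<rightarrow> carrier B" and \<rho>: "\<rho> \<in> UNIV \<rightarrow> carrier B"
    and eq: "proj_eval (carrier B \<rightarrow>\<^sub>E carrier A) A t \<sigma> = proj_eval (carrier B \<rightarrow>\<^sub>E carrier A) A u \<rho>"
  shows "term_eval (ops B) t \<sigma> = term_eval (ops B) u \<rho>"
proof -
  \<comment> \<open>interleave \<open>\<sigma>\<close> and \<open>\<rho>\<close> to reduce to a single assignment\<close>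
  define \<tau> where "\<tau> k = (if even k then \<sigma> (k div 2) else \<rho> (k div 2))" for k
  have \<tau>_even: "\<tau> \<circ> (\<lambda>k. 2 * k) = \<sigma>" and \<tau>_odd: "\<tau> \<circ> (\<lambda>k. Suc (2 * k)) = \<rho>"
    by (auto simp: \<tau>_def fun_eq_iff)
  have \<tau>: "\<tau> \<in> UNIV \<rightarrow> carrier B"
    using \<sigma> \<rho> by (auto simp: \<tau>_def Pi_iff)
  let ?t = "subst (\<lambda>k. Var (2 * k)) t" and ?u = "subst (\<lambda>k. Var (Suc (2 * k))) u"
  have "proj_eval (carrier B \<rightarrow>\<^sub>E carrier A) A ?t \<tau> = proj_eval (carrier B \<rightarrow>\<^sub>E carrier A) A ?u \<tau>"
    using eq by (simp add: proj_eval_def term_eval_rename comp_assoc \<tau>_even \<tau>_odd)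
  from term_eval_eq_if_proj_eval_eq_single[OF wd \<tau> this] show ?thesis
    by (simp add: term_eval_rename \<tau>_even \<tau>_odd)
qed

definition proj_evals :: "('a, 'f) alg \<Rightarrow> ('b, 'f) alg \<Rightarrow> (('b \<Rightarrow> 'a) \<Rightarrow> 'a) set" where
  "proj_evals A B = {proj_eval (carrier B \<rightarrow>\<^sub>E carrier A) A t \<sigma> | t \<sigma>. \<sigma> \<in> UNIV \<rightarrow> carrier B}"

lemma funcset_proj_evalsE:
  assumes "s \<in> UNIV \<rightarrow> proj_evals A B"
  obtains \<sigma> t where "\<And>n. \<sigma> n \<in> UNIV \<rightarrow> carrier B"
    and "s = (\<lambda>n. proj_eval (carrier B \<rightarrow>\<^sub>E carrier A) A (t n) (\<sigma> n))"
proof -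
  have "\<forall>n. \<exists>t \<sigma>. \<sigma> \<in> UNIV \<rightarrow> carrier B \<and> s n = proj_eval (carrier B \<rightarrow>\<^sub>E carrier A) A t \<sigma>"
    using assms unfolding proj_evals_def Pi_iff by blast
  then show thesis
    using that by metis
qed

lemma eps_well_defined_imp_HSP_via:
  assumes wd: "eps_well_defined A B" and A: "tau_alg A" and B: "tau_alg B"
  shows "HSP_via (carrier B \<rightarrow>\<^sub>E carrier A) A B"
proof -
  define I where "I = carrier B \<rightarrow>\<^sub>E carrier A"
  define S where "S = proj_evals A B"
  define h where "h x = (let r = SOME r. snd r \<in> UNIV \<rightarrow> carrier B \<and> x = proj_eval I A (fst r) (snd r)
                         in term_eval (ops B) (fst r) (snd r))" for x
  have S_iff: "x \<in> S \<longleftrightarrow> (\<exists>t \<sigma>. \<sigma> \<in> UNIV \<rightarrow> carrier B \<and> x = proj_eval I A t \<sigma>)" for x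
    by (auto simp: S_def proj_evals_def I_def)
  have h_proj_eval: "h (proj_eval I A t \<sigma>) = term_eval (ops B) t \<sigma>"
    if \<sigma>: "\<sigma> \<in> UNIV \<rightarrow> carrier B" for t \<sigma>
  proof -
    let ?P = "\<lambda>r. snd r \<in> UNIV \<rightarrow> carrier B \<and> proj_eval I A t \<sigma> = proj_eval I A (fst r) (snd r)"
    define r where "r = (SOME r. ?P r)"
    have "?P r"
      unfolding r_def by (rule someI[of _ "(t, \<sigma>)"]) (simp add: \<sigma>)
    then have "term_eval (ops B) t \<sigma> = term_eval (ops B) (fst r) (snd r)"
      unfolding I_def using term_eval_eq_if_proj_eval_eq[OF wd \<sigma>] by blast
    then show ?thesis
      by (simp add: h_def r_def Let_def)
  qed
  have ops_closed: "ops (power_alg I A) f s \<in> S \<and> h (ops (power_alg I A) f s) = ops B f (h \<circ> s)"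
    if s: "s \<in> UNIV \<rightarrow> S" for f s
  proof -
    obtain t \<sigma> where \<sigma>: "\<And>n. \<sigma> n \<in> UNIV \<rightarrow> carrier B" and s_eq: "s = (\<lambda>n. proj_eval I A (t n) (\<sigma> n))"
      using s unfolding S_def I_def by (blast elim: funcset_proj_evalsE)
    define \<tau> where "\<tau> = (\<lambda>k. \<sigma> (fst (prod_decode k)) (snd (prod_decode k)))"
    have \<tau>: "\<tau> \<in> UNIV \<rightarrow> carrier B"
      using \<sigma> by (auto simp: \<tau>_def Pi_iff)
    have \<tau>_encode: "(\<lambda>k. \<tau> (prod_encode (n, k))) = \<sigma> n" for n
      using ops_power_alg_proj_eval(2)[of \<sigma> n] by (simp add: \<tau>_def o_def)
    show ?thesis
      unfolding s_eq ops_power_alg_proj_eval(1) \<tau>_def[symmetric]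
      using \<tau> \<sigma> by (auto simp: S_iff h_proj_eval term_eval_rename o_def \<tau>_encode)
  qed
  have "subuniverse S (power_alg I A)"
    unfolding subuniverse_def
    using ops_closed proj_eval_in_carrier[OF A] by (auto simp: S_iff I_def)
  moreover have "alg_hom \<lparr>carrier = S, ops = ops (power_alg I A)\<rparr> B h"
    unfolding alg_hom_def
    using ops_closed h_proj_eval term_eval_in_carrier[OF B] by (auto simp: S_iff)
  moreover have "h ` S = carrier B"
  proof
    show "h ` S \<subseteq> carrier B"
      using h_proj_eval term_eval_in_carrier[OF B] by (auto simp: S_iff)
    show "carrier B \<subseteq> h ` S"
    proof
      fix b assume "b \<in> carrier B"
      then have "proj_eval I A (Var 0) (\<lambda>_. b) \<in> S" and "h (proj_eval I A (Var 0) (\<lambda>_. b)) = b"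
        using h_proj_eval by (auto simp: S_iff)
      then show "b \<in> h ` S" by (metis image_eqI)
    qed
  qed
  ultimately show ?thesis
    unfolding HSP_via_def I_def by blast
qed

theorem proposition8p1:
  fixes A :: "('a, 'f) alg" and B :: "('b, 'f) alg"
  assumes "tau_alg A" and "tau_alg B"
  shows "((\<exists>I :: 'i set. HSP_via I A B) \<longrightarrow>
            eps_well_defined A B \<and> ica_hom (clone_up A) (clone_up B) (eps A B))
       \<and> (eps_well_defined A B \<and> ica_hom (clone_up A) (clone_up B) (eps A B) \<longrightarrow>
            (\<exists>I :: ('b \<Rightarrow> 'a) set. HSP_via I A B))"
  using HSP_via_imp_eps_well_defined eps_well_defined_imp_ica_hom eps_well_defined_imp_HSP_via assms
  by blast

end
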